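(* Let $q\geq 2$ be an integer and $\theta\in\mathbb{Z}$. If $\theta$ is coprime with $q$, or if $q\mid\theta$, then the map $n\mapsto w_q(n)+\theta n$ is uniformly distributed modulo $q$: for every $x\in\mathbb{Z}$ the set $\{n\in\mathbb{N}: w_q(n)+\theta n\equiv x\pmod q\}$ has natural density $1/q$.
   Context: For an integer $q\geq 2$ and $n\in\mathbb{N}$: $v_q(0)=0$ and, for $n>0$, $v_q(n)=\max\{k: q^k\mid n\}$; $w_q(n)=\sum_{i=0}^n v_q(i)$. The natural density of $T\subseteq\mathbb{N}$ is $\lim_{N\to\infty}|\{n\in T: 0\leq n<N\}|/N$. *)

theory Defs
  imports "HOL-Analysis.Analysis"
begin

definition vq :: "nat \<Rightarrow> nat \<Rightarrow> nat" where
  "vq q n = (if n = 0 then 0 else Max {k. q ^ k dvd n})"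

definition wq :: "nat \<Rightarrow> nat \<Rightarrow> nat" where
  "wq q n = (\<Sum>i\<in>{0..n}. vq q i)"

definition has_natural_density :: "nat set \<Rightarrow> real \<Rightarrow> bool" where
  "has_natural_density T d \<longleftrightarrow>
     ((\<lambda>N. real (card {n \<in> T. n < N}) / real N) \<longlonglongrightarrow> d)"

end

theory Submission
  imports Defs "HOL-Number_Theory.Cong"
begin

text \<open>
  Since v_q(qj) = v_q(j) + 1 and v_q vanishes off the multiples of q, w_q(qm + r) = m + w_q(m)
  for r < q. If \<theta> is coprime with q, then on the block qm \<le> n < qm + q the residue of
  w_q(n) + \<theta>n is a + \<theta>r for a constant a, and r \<mapsto> a + \<theta>r permutes the residues mod q, so every
  class meets every such block exactly once. If q divides \<theta>, then on the block
  q^2 m \<le> n < q^2 (m + 1) the residue is (n div q) + m + w_q(m) mod q, so every class meets it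
  exactly q times. A set meeting every block of length B in exactly c elements has natural
  density c/B.
\<close>

lemma vq_eq_multiplicity: "q \<noteq> 1 \<Longrightarrow> vq q n = multiplicity q n"
  by (cases "n = 0") (simp_all add: vq_def multiplicity_eq_Max)

lemma wq_Suc: "wq q (Suc n) = wq q n + vq q (Suc n)"
  by (simp add: wq_def)

lemma wq_mult_add_eq_wq_mult:
  assumes "1 < q" "r < q"
  shows "wq q (q * m + r) = wq q (q * m)"
  using \<open>r < q\<close>
proof (induction r)
  case (Suc r)
  have "\<not> q dvd q * m + Suc r"
    using Suc.prems by (subst dvd_add_right_iff) (auto simp: nat_dvd_not_less)
  with Suc assms(1) show ?case
    by (simp add: wq_Suc vq_eq_multiplicity not_dvd_imp_multiplicity_0)
qed simp

lemma wq_mult: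
  assumes "1 < q"
  shows "wq q (q * m) = m + wq q m"
proof (induction m)
  case 0
  show ?case
    by (simp add: wq_def vq_def)
next
  case (Suc m)
  have q_ne_1: "q \<noteq> 1"
    using assms by simp
  have "q * Suc m = Suc (q * m + (q - 1))"
    using assms by simp
  then have "wq q (q * Suc m) = wq q (q * m + (q - 1)) + vq q (q * Suc m)"
    by (simp only: wq_Suc)
  also have "wq q (q * m + (q - 1)) = wq q (q * m)"
    using assms by (intro wq_mult_add_eq_wq_mult) auto
  also have "vq q (q * Suc m) = Suc (vq q (Suc m))"
    unfolding vq_eq_multiplicity[OF q_ne_1] by (rule multiplicity_times_same) (use assms in auto)
  finally show ?case
    using Suc.IH by (simp add: wq_Suc)
qed

lemma wq_mult_add:
  assumes "1 < q" "r < q"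
  shows "wq q (q * m + r) = m + wq q m"
  using assms by (simp add: wq_mult_add_eq_wq_mult wq_mult)

lemma card_less_mult_eq_sum_blocks:
  fixes T :: "nat set"
  shows "card {n \<in> T. n < B * L} = (\<Sum>m<L. card {r. r < B \<and> B * m + r \<in> T})"
proof -
  let ?S = "SIGMA m:{..<L}. {r. r < B \<and> B * m + r \<in> T}"
  have "{n \<in> T. n < B * L} = (\<lambda>(m, r). B * m + r) ` ?S"
  proof (intro set_eqI iffI)
    fix n assume n: "n \<in> {n \<in> T. n < B * L}"
    then have "B > 0"
      by (cases B) auto
    with n have "n div B < L"
      by (simp add: div_less_iff_less_mult mult.commute)
    with n \<open>B > 0\<close> show "n \<in> (\<lambda>(m, r). B * m + r) ` ?S"
      by (intro image_eqI[of _ _ "(n div B, n mod B)"]) auto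
  next
    fix n assume "n \<in> (\<lambda>(m, r). B * m + r) ` ?S"
    then obtain m r where "m < L" "r < B" "B * m + r \<in> T" "n = B * m + r"
      by auto
    moreover have "B * m + r < B * Suc m"
      using \<open>r < B\<close> by simp
    moreover have "B * Suc m \<le> B * L"
      using \<open>m < L\<close> by (intro mult_le_mono2) simp
    ultimately show "n \<in> {n \<in> T. n < B * L}" by simp
  qed
  moreover have "inj_on (\<lambda>(m, r). B * m + r) ?S"
  proof (rule inj_onI, clarsimp)
    fix m r m' r' assume r: "r < B" "r' < B" and eq: "B * m + r = B * m' + r'"
    then have "(B * m + r) div B = (B * m' + r') div B"
      by simp
    with r have "m = m'"
      by simp
    with eq show "m = m' \<and> r = r'"
      by simp
  qed
  ultimately show ?thesis
    by (simp add: card_image)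
qed

lemma has_natural_density_blocks:
  fixes T :: "nat set"
  assumes "B > 0" and block: "\<And>m. card {r. r < B \<and> B * m + r \<in> T} = c"
  shows "has_natural_density T (c / B)"
proof -
  define cnt where "cnt N = card {n \<in> T. n < N}" for N
  have cnt_mult: "cnt (B * L) = L * c" for L
    by (simp add: cnt_def card_less_mult_eq_sum_blocks block)
  have cnt_mono: "cnt N \<le> cnt N'" if "N \<le> N'" for N N'
    unfolding cnt_def using that by (intro card_mono) auto
  have bounds: "c / B - c / N \<le> cnt N / N \<and> cnt N / N \<le> c / B + c / N" if "N > 0" for N
  proof -
    define L where "L = N div B"
    have "B * L \<le> N" "N \<le> B * (L + 1)"
      using \<open>B > 0\<close> by (auto simp: L_def dividend_less_times_div less_imp_le)
    then have "L * c \<le> cnt N" "cnt N \<le> (L + 1) * c"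
      using cnt_mono[of "B * L" N] cnt_mono[of N "B * (L + 1)"] cnt_mult[of L] cnt_mult[of "L + 1"]
      by simp_all
    have "cnt N * B \<le> N * c + c * B"
    proof -
      have "cnt N * B \<le> (L + 1) * c * B"
        using \<open>cnt N \<le> (L + 1) * c\<close> by (rule mult_le_mono1)
      also have "\<dots> = B * L * c + c * B"
        by (simp add: algebra_simps)
      also have "\<dots> \<le> N * c + c * B"
        using \<open>B * L \<le> N\<close> by (intro add_right_mono mult_le_mono1)
      finally show ?thesis .
    qed
    moreover have "N * c \<le> cnt N * B + c * B"
    proof -
      have "N * c \<le> B * (L + 1) * c"
        using \<open>N \<le> B * (L + 1)\<close> by (rule mult_le_mono1)
      also have "\<dots> = L * c * B + c * B"
        by (simp add: algebra_simps)
      also have "\<dots> \<le> cnt N * B + c * B"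
        using \<open>L * c \<le> cnt N\<close> by (intro add_right_mono mult_le_mono1)
      finally show ?thesis .
    qed
    ultimately have "N * real c - c * B \<le> cnt N * real B" "cnt N * real B \<le> N * c + c * B"
      by (simp_all flip: of_nat_mult of_nat_add)
    moreover have fractions: "c / B - c / N = (N * real c - c * B) / (N * B)"
      "cnt N / N = cnt N * real B / (N * B)" "c / B + c / N = (N * real c + c * B) / (N * B)"
      using \<open>B > 0\<close> \<open>N > 0\<close> by (simp_all add: field_simps)
    ultimately show ?thesis
      unfolding fractions by (intro conjI divide_right_mono) simp_all
  qed
  have limits: "(\<lambda>N. c / B - c / N) \<longlonglongrightarrow> c / B" "(\<lambda>N. c / B + c / N) \<longlonglongrightarrow> c / B"
    using tendsto_diff[OF tendsto_const lim_const_over_n] tendsto_add[OF tendsto_const lim_const_over_n]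
    by simp_all
  have "\<forall>\<^sub>F N in sequentially. c / B - c / N \<le> cnt N / N \<and> cnt N / N \<le> c / B + c / N"
    using eventually_gt_at_top[of 0] by (rule eventually_mono) (rule bounds)
  then have "(\<lambda>N. cnt N / N) \<longlonglongrightarrow> c / B"
    by (intro tendsto_sandwich[OF _ _ limits]) (auto elim: eventually_mono)
  then show ?thesis
    by (simp add: has_natural_density_def cnt_def)
qed

lemma card_affine_residue_solutions:
  fixes a b c :: int and m :: nat
  assumes "m > 0" and "coprime b (int m)"
  shows "card {r. r < m \<and> (a + b * int r) mod int m = c mod int m} = 1"
proof -
  obtain u where u: "[b * u = 1] (mod int m)"
    using cong_solve_coprime_int[OF assms(2)] by blast
  define d where "d = u * (c - a)"
  have "[b * d = c - a] (mod int m)"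
    using cong_mult[OF u cong_refl[of "c - a"]] by (simp add: d_def ac_simps)
  have solution_iff: "[a + b * int r = c] (mod int m) \<longleftrightarrow> [int r = d] (mod int m)" for r
  proof -
    have "[a + b * int r = c] (mod int m) \<longleftrightarrow> [b * int r = b * d] (mod int m)"
      using \<open>[b * d = c - a] (mod int m)\<close>
      by (metis (no_types, lifting) add.commute cong_add_lcancel cong_sym_eq cong_trans diff_add_cancel)
    also have "\<dots> \<longleftrightarrow> [int r = d] (mod int m)"
      using assms(2) by (rule cong_mult_lcancel)
    finally show ?thesis .
  qed
  have "{r. r < m \<and> (a + b * int r) mod int m = c mod int m} = {nat (d mod int m)}"
    using assms(1) by (auto simp: solution_iff[unfolded cong_def] cong_def nat_less_iff)
  then show ?thesis
    by simp
qed

lemma card_wq_linear_class_block_coprime: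
  fixes \<theta> x :: int
  assumes "1 < q" and "coprime \<theta> (int q)"
  shows "card {r. r < q \<and>
           (int (wq q (q * m + r)) + \<theta> * int (q * m + r)) mod int q = x mod int q} = 1"
proof -
  define a where "a = int (m + wq q m) + \<theta> * int (q * m)"
  have "int (wq q (q * m + r)) + \<theta> * int (q * m + r) = a + \<theta> * int r" if "r < q" for r
    using wq_mult_add[OF assms(1) that] by (simp add: a_def algebra_simps)
  then have "{r. r < q \<and> (int (wq q (q * m + r)) + \<theta> * int (q * m + r)) mod int q = x mod int q}
      = {r. r < q \<and> (a + \<theta> * int r) mod int q = x mod int q}"
    by auto
  also have "card \<dots> = 1"
    using assms by (intro card_affine_residue_solutions) auto
  finally show ?thesis .
qed

lemma card_wq_linear_class_block_dvd:
  fixes \<theta> x :: int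
  assumes "1 < q" and "int q dvd \<theta>"
  shows "card {t. t < q * q \<and>
           (int (wq q (q * q * m + t)) + \<theta> * int (q * q * m + t)) mod int q = x mod int q} = q"
proof -
  define a where "a = int (m + wq q m)"
  define T where
    "T = {t. (int (wq q (q * q * m + t)) + \<theta> * int (q * q * m + t)) mod int q = x mod int q}"
  have block_iff: "q * s + r \<in> T \<longleftrightarrow> (int s + a) mod int q = x mod int q" if "s < q" "r < q" for s r
  proof -
    obtain k where k: "\<theta> = int q * k"
      using assms(2) by blast
    have decomposition: "q * q * m + (q * s + r) = q * (q * m + s) + r"
      by (simp add: algebra_simps)
    have "wq q (q * q * m + (q * s + r)) = q * m + s + (m + wq q m)"
      unfolding decomposition using that assms(1) by (simp add: wq_mult_add)
    then have "int (wq q (q * q * m + (q * s + r))) + \<theta> * int (q * q * m + (q * s + r))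
        = (int s + a) + int q * (int m + k * int (q * q * m + (q * s + r)))"
      by (simp add: a_def k algebra_simps)
    then show ?thesis
      by (simp add: T_def)
  qed
  then have block_set: "{r. r < q \<and> q * s + r \<in> T}
      = (if (int s + a) mod int q = x mod int q then {..<q} else {})" if "s < q" for s
    using that by auto
  have "{t. t < q * q \<and>
           (int (wq q (q * q * m + t)) + \<theta> * int (q * q * m + t)) mod int q = x mod int q}
      = {t \<in> T. t < q * q}"
    by (auto simp: T_def)
  also have "card \<dots> = (\<Sum>s<q. card {r. r < q \<and> q * s + r \<in> T})"
    by (rule card_less_mult_eq_sum_blocks)
  also have "\<dots> = (\<Sum>s<q. if (int s + a) mod int q = x mod int q then q else 0)"
    by (intro sum.cong) (simp_all add: block_set)
  also have "\<dots> = q * card {s. s < q \<and> (a + 1 * int s) mod int q = x mod int q}"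
    by (simp add: sum.If_cases Collect_conj_eq lessThan_def Int_commute add.commute)
  also have "card {s. s < q \<and> (a + 1 * int s) mod int q = x mod int q} = 1"
    using assms(1) by (intro card_affine_residue_solutions) auto
  finally show ?thesis
    by simp
qed

theorem proposition3p4:
  fixes q :: nat and \<theta> :: int
  assumes "q \<ge> 2"
    and "coprime \<theta> (int q) \<or> int q dvd \<theta>"
  shows "\<forall>x::int. has_natural_density
           {n. (int (wq q n) + \<theta> * int n) mod int q = x mod int q} (1 / real q)"
proof
  fix x :: int
  let ?T = "{n. (int (wq q n) + \<theta> * int n) mod int q = x mod int q}"
  have "1 < q"
    using assms(1) by simp
  from assms(2) show "has_natural_density ?T (1 / real q)"
  proof
    assume "coprime \<theta> (int q)"
    with \<open>1 < q\<close> have "has_natural_density ?T (real 1 / real q)"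
      by (intro has_natural_density_blocks)
        (simp_all add: card_wq_linear_class_block_coprime del: of_nat_add of_nat_mult)
    then show ?thesis
      by simp
  next
    assume "int q dvd \<theta>"
    with \<open>1 < q\<close> have "has_natural_density ?T (real q / real (q * q))"
      by (intro has_natural_density_blocks)
        (simp_all add: card_wq_linear_class_block_dvd del: of_nat_add of_nat_mult)
    then show ?thesis
      using \<open>1 < q\<close> by simp
  qed
qed

end
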